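(* For $p\in(0,\infty)$ and $w\in\mathbb{R}$ let $f_p(w)=\int_0^{\infty}x^{p-1}e^{-x^2}\sin(wx)\,\mathrm{d}x$. If $p\in(2k,2k+2]$ for some $k\in\{0,1,2,\dots\}$, then $f_p$ has $k$ roots on $(0,\infty)$. *)

theory Defs
  imports "HOL-Analysis.Analysis"
begin

text \<open>f_p(w) = integral over (0,infinity) of x^(p-1) e^(-x^2) sin(w x) dx
  (Henstock-Kurzweil integral; the integrand is absolutely integrable for p > 0).\<close>
definition fp :: "real \<Rightarrow> real \<Rightarrow> real" where
  "fp p w = integral {0<..} (\<lambda>x. x powr (p - 1) * exp (- (x\<^sup>2)) * sin (w * x))"

end

theory Submission
  imports Defs "HOL-Real_Asymp.Real_Asymp"
begin

(* Write g_q for the cosine transform fp_cos q.  Differentiation under the integral sign and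
   integration by parts give f_p' = g_(p+1) and 2 f_(p+2) = p f_p + w g_(p+1), so f_p solves
   2 y'' + w y' + p y = 0.  For solutions y1, y2 with parameters p1 < p2 the weighted Wronskian
   W = e^(w^2/4) (y1 y2' - y1' y2) has W' = e^(w^2/4) (p1 - p2) y1 y2 / 2, which gives Sturm
   comparison: between two zeros of y1 there is a zero of y2.

   Upper bound: Rolle's theorem for e^(w^2/4) f_(p+2), whose derivative is a multiple of
   e^(w^2/4) g_(p+1), and for e^(w^2/4) g_(p+1), whose derivative is a multiple of
   e^(w^2/4) f_p, shows that f_(p+2) has at most one positive zero more than f_p.

   Lower bound: for q = 2k+2 < p, Sturm comparison puts a zero of f_p after 0 and after every
   positive zero of f_q.  Beyond the last one, W tends to 0 at infinity, because e^(w^2/4) f_q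
   grows like a polynomial of degree 2k+1 while f_p(w) = O(w^(-p)).

   For 0 < p <= 2 there is no positive zero: f_2 = (w/2) g_1(0) e^(-w^2/4), and for p < 2 the
   first zero of f_p would force a zero of f_2.  Induction on k concludes. *)

section \<open>Integrals over the half-line\<close>

lemma set_integrable_powr_div_exp:
  assumes s: "s > 0"
  shows "set_integrable lborel {0<..} (\<lambda>x::real. x powr (s - 1) / exp x)"
proof -
  have "integrable lborel (\<lambda>x. indicator {0..} x * (x powr (s - 1) / exp x))"
  proof (rule integrableI_nonneg)
    show "(\<lambda>x. indicator {0..} x * (x powr (s - 1) / exp x)) \<in> borel_measurable lborel"
      by measurable
    show "AE x in lborel. 0 \<le> indicator {0..} x * (x powr (s - 1) / exp x)"
      by (auto simp: indicator_def)
    have "(\<integral>\<^sup>+x. ennreal (indicator {0..} x * (x powr (s - 1) / exp x)) \<partial>lborel) = ennreal (Gamma s)"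
      using Gamma_conv_nn_integral_real[OF s] by (simp add: mult.assoc)
    then show "(\<integral>\<^sup>+x. ennreal (indicator {0..} x * (x powr (s - 1) / exp x)) \<partial>lborel) < \<infinity>"
      by simp
  qed
  then have "set_integrable lborel {0..} (\<lambda>x. x powr (s - 1) / exp x)"
    by (simp add: set_integrable_def)
  then show ?thesis
    by (rule set_integrable_subset) auto
qed

lemma set_integrable_powr_gaussian:
  fixes h :: "real \<Rightarrow> real"
  assumes s: "s > 0" and h: "h \<in> borel_measurable borel" "\<And>x. \<bar>h x\<bar> \<le> 1"
  shows "set_integrable lborel {0<..} (\<lambda>x. x powr (s - 1) * exp (- (x\<^sup>2)) * h x)"
proof -
  have gamma: "set_integrable lborel {0<..} (\<lambda>x. exp (1/4) * (x powr (s - 1) / exp x))"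
    using set_integrable_powr_div_exp[OF s] by (rule set_integrable_mult_right)
  show ?thesis
  proof (rule set_integrable_bound[OF gamma])
    show "set_borel_measurable lborel {0<..} (\<lambda>x. x powr (s - 1) * exp (- (x\<^sup>2)) * h x)"
      unfolding set_borel_measurable_def using h(1) by measurable
    have "x powr (s - 1) * exp (- (x\<^sup>2)) * \<bar>h x\<bar> \<le> exp (1/4) * (x powr (s - 1) / exp x)"
      for x :: real
    proof -
      have "- (x\<^sup>2) \<le> 1/4 - x"
        using zero_le_power2[of "x - 1/2"] by (simp add: power2_eq_square algebra_simps)
      then have "exp (- (x\<^sup>2)) * \<bar>h x\<bar> \<le> exp (1/4 - x) * 1"
        using h(2)[of x] by (intro mult_mono) auto
      then have "x powr (s - 1) * (exp (- (x\<^sup>2)) * \<bar>h x\<bar>) \<le> x powr (s - 1) * (exp (1/4 - x) * 1)"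
        by (rule mult_left_mono) simp
      then show ?thesis
        by (simp add: exp_diff mult_ac)
    qed
    then show "AE x in lborel. x \<in> {0<..} \<longrightarrow> norm (x powr (s - 1) * exp (- (x\<^sup>2)) * h x)
        \<le> norm (exp (1/4) * (x powr (s - 1) / exp x))"
      by (simp add: abs_mult)
  qed
qed

lemma abs_taylor_remainder_le:
  fixes f f' f'' :: "real \<Rightarrow> real"
  assumes f: "\<And>t. (f has_real_derivative f' t) (at t)"
    and f': "\<And>t. (f' has_real_derivative f'' t) (at t)" and f'': "\<And>t. \<bar>f'' t\<bar> \<le> 1"
  shows "\<bar>f (a + b) - f a - b * f' a\<bar> \<le> b\<^sup>2"
proof -
  have lip: "\<bar>f' u - f' v\<bar> \<le> \<bar>u - v\<bar>" for u v
    using field_differentiable_bound[of UNIV f' f'' 1 u v] f' f''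
    by (auto simp: has_field_derivative_at_within)
  define F where "F t = f (a + t) - t * f' a" for t
  have "norm (F b - F 0) \<le> \<bar>b\<bar> * norm (b - 0)"
  proof (rule field_differentiable_bound[of "{- \<bar>b\<bar>..\<bar>b\<bar>}"])
    show "(F has_field_derivative f' (a + t) - f' a) (at t within {- \<bar>b\<bar>..\<bar>b\<bar>})" for t
    proof -
      have "(F has_real_derivative f' (a + t) * (0 + 1) - 1 * f' a) (at t)"
        unfolding F_def by (intro DERIV_diff DERIV_chain2[OF f] DERIV_add DERIV_cmult_right DERIV_const DERIV_ident)
      then show ?thesis by (simp add: has_field_derivative_at_within)
    qed
    show "norm (f' (a + t) - f' a) \<le> \<bar>b\<bar>" if "t \<in> {- \<bar>b\<bar>..\<bar>b\<bar>}" for t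
      using lip[of "a + t" a] that by auto
  qed auto
  then show ?thesis by (simp add: F_def power2_eq_square abs_mult_self_eq)
qed

lemma integral_greaterThan_0_FTC:
  fixes f F :: "real \<Rightarrow> real"
  assumes f: "set_integrable lborel {0<..} f" "\<And>x. x > 0 \<Longrightarrow> isCont f x"
    and F: "\<And>x. x > 0 \<Longrightarrow> (F has_real_derivative f x) (at x)"
    and lim: "(F \<longlongrightarrow> A) (at_right 0)" "(F \<longlongrightarrow> B) at_top"
  shows "integral {0<..} f = B - A"
proof -
  have "(LBINT x=ereal 0..\<infinity>. f x) = B - A"
  proof (rule interval_integral_FTC_integrable[where F=F])
    show "(F has_vector_derivative f x) (at x)" if "ereal 0 < ereal x" for x
      using F[of x] that by (simp add: has_real_derivative_iff_has_vector_derivative)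
    show "((F \<circ> real_of_ereal) \<longlongrightarrow> A) (at_right (ereal 0))"
      using lim(1) by (simp add: ereal_tendsto_simps1)
    show "((F \<circ> real_of_ereal) \<longlongrightarrow> B) (at_left \<infinity>)"
      using lim(2) by (simp add: ereal_tendsto_simps1)
  qed (use f in auto)
  then show ?thesis
    using interval_lebesgue_integral_0_infty(2)[of lborel f] set_borel_integral_eq_integral(2)[OF f(1)]
    by (simp add: zero_ereal_def)
qed

lemma abs_integral_difference_quotient_le:
  fixes g f f' :: "real \<Rightarrow> real"
  assumes int: "\<And>v. (\<lambda>x. g x * f (v * x)) integrable_on S"
    "(\<lambda>x. g x * x * f' (w * x)) integrable_on S" "(\<lambda>x. g x * x\<^sup>2) integrable_on S"
    and g: "\<And>x. x \<in> S \<Longrightarrow> 0 \<le> g x"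
    and taylor: "\<And>a b. \<bar>f (a + b) - f a - b * f' a\<bar> \<le> b\<^sup>2"
    and "v \<noteq> w"
  shows "\<bar>(integral S (\<lambda>x. g x * f (v * x)) - integral S (\<lambda>x. g x * f (w * x))) / (v - w)
      - integral S (\<lambda>x. g x * x * f' (w * x))\<bar> \<le> \<bar>v - w\<bar> * integral S (\<lambda>x. g x * x\<^sup>2)"
proof -
  let ?h = "\<lambda>x. (g x * f (v * x) - g x * f (w * x)) / (v - w) - g x * x * f' (w * x)"
  have "(integral S (\<lambda>x. g x * f (v * x)) - integral S (\<lambda>x. g x * f (w * x))) / (v - w)
      - integral S (\<lambda>x. g x * x * f' (w * x)) = integral S ?h"
    using int by (simp add: integral_diff integrable_diff divide_inverse integrable_on_mult_left)
  moreover have "norm (?h x) \<le> \<bar>v - w\<bar> * (g x * x\<^sup>2)" if "x \<in> S" for x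
  proof -
    have "norm (?h x) = \<bar>g x * (f (w * x + (v - w) * x) - f (w * x) - ((v - w) * x) * f' (w * x)) / (v - w)\<bar>"
      using \<open>v \<noteq> w\<close> by (simp add: field_simps)
    also have "\<dots> \<le> g x * ((v - w) * x)\<^sup>2 / \<bar>v - w\<bar>"
      using g[OF that] by (simp add: abs_mult divide_right_mono mult_left_mono taylor)
    also have "\<dots> = \<bar>v - w\<bar> * (g x * x\<^sup>2)"
      using \<open>v \<noteq> w\<close> by (simp add: power2_eq_square field_simps abs_mult_self_eq)
    finally show ?thesis .
  qed
  then have "norm (integral S ?h) \<le> integral S (\<lambda>x. \<bar>v - w\<bar> * (g x * x\<^sup>2))"
    using int by (intro integral_norm_bound_integral)
      (auto simp: divide_inverse intro!: integrable_diff integrable_on_mult_left integrable_on_mult_right)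
  ultimately show ?thesis by simp
qed

lemma has_real_derivative_integral_dilation:
  fixes g f f' :: "real \<Rightarrow> real"
  assumes "\<And>v. (\<lambda>x. g x * f (v * x)) integrable_on S"
    "(\<lambda>x. g x * x * f' (w * x)) integrable_on S" "(\<lambda>x. g x * x\<^sup>2) integrable_on S"
    and "\<And>x. x \<in> S \<Longrightarrow> 0 \<le> g x"
    and "\<And>a b. \<bar>f (a + b) - f a - b * f' a\<bar> \<le> b\<^sup>2"
  shows "((\<lambda>v. integral S (\<lambda>x. g x * f (v * x))) has_real_derivative
            integral S (\<lambda>x. g x * x * f' (w * x))) (at w)"
proof -
  let ?F = "\<lambda>v. integral S (\<lambda>x. g x * f (v * x))"
  let ?D = "integral S (\<lambda>x. g x * x * f' (w * x))"
  let ?I = "integral S (\<lambda>x. g x * x\<^sup>2)"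
  have "((\<lambda>v. (?F v - ?F w) / (v - w) - ?D) \<longlongrightarrow> 0) (at w)"
  proof (rule Lim_null_comparison)
    show "\<forall>\<^sub>F v in at w. norm ((?F v - ?F w) / (v - w) - ?D) \<le> \<bar>v - w\<bar> * ?I"
      using abs_integral_difference_quotient_le[OF assms] by (auto simp: eventually_at_filter)
    have "((\<lambda>v. \<bar>v - w\<bar> * ?I) \<longlongrightarrow> \<bar>w - w\<bar> * ?I) (at w)"
      by (intro tendsto_intros)
    then show "((\<lambda>v. \<bar>v - w\<bar> * ?I) \<longlongrightarrow> 0) (at w)"
      by simp
  qed
  then show ?thesis
    by (simp add: has_field_derivative_iff LIM_zero_iff)
qed

lemma set_integrable_powr_gaussian_dilation:
  fixes \<phi> :: "real \<Rightarrow> real"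
  assumes "r > -1" "\<And>t. isCont \<phi> t" "\<And>t. \<bar>\<phi> t\<bar> \<le> 1"
  shows "set_integrable lborel {0<..} (\<lambda>x. x powr r * exp (- (x\<^sup>2)) * \<phi> (w * x))"
proof -
  have "isCont (\<lambda>x. \<phi> (w * x)) x" for x
    by (rule isCont_o2[OF _ assms(2)]) (intro continuous_intros)
  then have "(\<lambda>x. \<phi> (w * x)) \<in> borel_measurable borel"
    by (intro borel_measurable_continuous_onI continuous_at_imp_continuous_on) auto
  then show ?thesis
    using set_integrable_powr_gaussian[of "r + 1" "\<lambda>x. \<phi> (w * x)"] assms by simp
qed

lemma has_real_derivative_powr_gaussian:
  fixes h h' :: "real \<Rightarrow> real"
  assumes x: "x > 0" and h: "\<And>t. (h has_real_derivative h' t) (at t)"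
  shows "((\<lambda>x. x powr s * exp (- (x\<^sup>2)) * h (w * x)) has_real_derivative
    s * (x powr (s - 1) * exp (- (x\<^sup>2)) * h (w * x)) - 2 * (x powr (s + 2 - 1) * exp (- (x\<^sup>2)) * h (w * x))
      + w * (x powr (s + 1 - 1) * exp (- (x\<^sup>2)) * h' (w * x))) (at x)"
proof -
  have "((\<lambda>x. exp (- (x\<^sup>2))) has_real_derivative exp (- (x\<^sup>2)) * (- (2 * x))) (at x)"
    by (auto intro!: derivative_eq_intros)
  then have "((\<lambda>x. x powr s * exp (- (x\<^sup>2)) * h (w * x)) has_real_derivative
      (s * x powr (s - 1) * exp (- (x\<^sup>2)) + exp (- (x\<^sup>2)) * (- (2 * x)) * x powr s) * h (w * x)
        + h' (w * x) * (w * 1) * (x powr s * exp (- (x\<^sup>2)))) (at x)"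
    by (intro DERIV_mult has_real_derivative_powr x DERIV_chain2[OF h] DERIV_cmult DERIV_ident)
  moreover have "x powr (s + 2 - 1) = x powr s * x" "x powr (s + 1 - 1) = x powr s"
    using powr_mult_base[of x s] x by (simp_all add: mult.commute)
  ultimately show ?thesis
    by (simp add: algebra_simps)
qed

lemma powr_gaussian_tendsto_0:
  fixes h :: "real \<Rightarrow> real"
  assumes s: "s \<ge> 0" and h0: "s = 0 \<Longrightarrow> h 0 = 0"
    and h: "isCont h 0" "\<And>t. \<bar>h t\<bar> \<le> 1"
  shows "((\<lambda>x. x powr s * exp (- (x\<^sup>2)) * h (w * x)) \<longlongrightarrow> 0) (at_right 0)"
    and "((\<lambda>x. x powr s * exp (- (x\<^sup>2)) * h (w * x)) \<longlongrightarrow> 0) at_top"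
proof -
  have "isCont (\<lambda>x. h (w * x)) 0"
    by (rule isCont_o2[where f="\<lambda>x. w * x"]) (use h(1) in \<open>auto intro: continuous_intros\<close>)
  then have "((\<lambda>x. exp (- (x\<^sup>2)) * h (w * x)) \<longlongrightarrow> exp (- (0\<^sup>2)) * h (w * 0)) (at_right 0)"
    by (intro tendsto_intros) (auto simp: isCont_def filterlim_at_split)
  then have lim: "((\<lambda>x. exp (- (x\<^sup>2)) * h (w * x)) \<longlongrightarrow> h 0) (at_right 0)"
    by simp
  show "((\<lambda>x. x powr s * exp (- (x\<^sup>2)) * h (w * x)) \<longlongrightarrow> 0) (at_right 0)"
  proof (cases "s = 0")
    case True
    have "\<forall>\<^sub>F x in at_right 0. exp (- (x\<^sup>2)) * h (w * x) = x powr s * exp (- (x\<^sup>2)) * h (w * x)"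
      using eventually_at_right_less[of 0] by eventually_elim (simp add: True)
    then show ?thesis
      using lim h0[OF True] by (auto intro: Lim_transform_eventually)
  next
    case False
    have "((\<lambda>x::real. x powr s) \<longlongrightarrow> 0) (at_right 0)"
      using s False by real_asymp
    from tendsto_mult[OF this lim] show ?thesis
      by (simp add: mult.assoc)
  qed
  show "((\<lambda>x. x powr s * exp (- (x\<^sup>2)) * h (w * x)) \<longlongrightarrow> 0) at_top"
  proof (rule Lim_null_comparison)
    show "((\<lambda>x::real. x powr s * exp (- (x\<^sup>2))) \<longlongrightarrow> 0) at_top"
      by real_asymp
    show "\<forall>\<^sub>F x in at_top. norm (x powr s * exp (- (x\<^sup>2)) * h (w * x)) \<le> x powr s * exp (- (x\<^sup>2))"
      using h(2) by (intro always_eventually allI) (simp add: abs_mult mult_left_le)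
  qed
qed

lemma integral_powr_gaussian_by_parts:
  fixes h h' :: "real \<Rightarrow> real"
  assumes s: "s \<ge> 0" and h0: "s = 0 \<Longrightarrow> h 0 = 0"
    and h: "\<And>t. (h has_real_derivative h' t) (at t)" "\<And>t. isCont h' t"
    and bounds: "\<And>t. \<bar>h t\<bar> \<le> 1" "\<And>t. \<bar>h' t\<bar> \<le> 1"
  shows "2 * integral {0<..} (\<lambda>x. x powr (s + 2 - 1) * exp (- (x\<^sup>2)) * h (w * x))
    = s * integral {0<..} (\<lambda>x. x powr (s - 1) * exp (- (x\<^sup>2)) * h (w * x))
      + w * integral {0<..} (\<lambda>x. x powr (s + 1 - 1) * exp (- (x\<^sup>2)) * h' (w * x))"
proof -
  let ?g = "\<lambda>r \<phi> x. x powr r * exp (- (x\<^sup>2)) * \<phi> (w * x)"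
  let ?f = "\<lambda>x. s * ?g (s - 1) h x - 2 * ?g (s + 2 - 1) h x + w * ?g (s + 1 - 1) h' x"
  have hc: "isCont h t" for t
    using h(1) by (rule DERIV_isCont)
  have comp: "isCont (\<lambda>x. \<phi> (w * x)) x" if "\<And>t. isCont \<phi> t" for \<phi> :: "real \<Rightarrow> real" and x
    by (rule isCont_o2[OF _ that]) (intro continuous_intros)
  have int0: "set_integrable lborel {0<..} (\<lambda>x. s * ?g (s - 1) h x)"
  proof (cases "s = 0")
    case False
    then show ?thesis
      using s by (intro set_integrable_mult_right set_integrable_powr_gaussian_dilation hc bounds) auto
  qed (simp add: set_integrable_def)
  have "integral {0<..} ?f = 0 - 0"
  proof (rule integral_greaterThan_0_FTC[where F="?g s h"])
    show "set_integrable lborel {0<..} ?f"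
      using s by (intro set_integral_add set_integral_diff set_integrable_mult_right int0
          set_integrable_powr_gaussian_dilation h(2) hc bounds) auto
    show "isCont ?f x" if "x > 0" for x
      using that comp[OF h(2)] comp[OF hc] by (intro continuous_intros) auto
    show "(?g s h has_real_derivative ?f x) (at x)" if "x > 0" for x
      using has_real_derivative_powr_gaussian[OF that h(1)] by simp
  qed (use powr_gaussian_tendsto_0[OF s h0 hc bounds(1)] in auto)
  moreover have "integral {0<..} ?f = s * integral {0<..} (?g (s - 1) h) - 2 * integral {0<..} (?g (s + 2 - 1) h)
      + w * integral {0<..} (?g (s + 1 - 1) h')"
    using s int0 set_integrable_powr_gaussian_dilation[of "s + 2 - 1" h]
      set_integrable_powr_gaussian_dilation[of "s + 1 - 1" h'] h(2) hc bounds
    by (simp add: integral_add integral_diff set_borel_integral_eq_integral(1) integrable_diff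
        integrable_on_mult_right)
  ultimately show ?thesis by simp
qed

section \<open>The sine and cosine transforms\<close>

definition fp_cos :: "real \<Rightarrow> real \<Rightarrow> real" where
  "fp_cos p w = integral {0<..} (\<lambda>x. x powr (p - 1) * exp (- (x\<^sup>2)) * cos (w * x))"

lemma powr_gaussian_integrable:
  fixes s w :: real
  assumes "s > 0"
  shows "(\<lambda>x. x powr (s - 1) * exp (- (x\<^sup>2)) * sin (w * x)) integrable_on {0<..}"
    and "(\<lambda>x. x powr (s - 1) * exp (- (x\<^sup>2)) * cos (w * x)) integrable_on {0<..}"
    and "(\<lambda>x. x powr (s - 1) * exp (- (x\<^sup>2))) integrable_on {0<..}"
  using set_integrable_powr_gaussian[OF assms, of "\<lambda>x. sin (w * x)"]
    set_integrable_powr_gaussian[OF assms, of "\<lambda>x. cos (w * x)"]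
    set_integrable_powr_gaussian[OF assms, of "\<lambda>_. 1"]
  by (auto dest: set_borel_integral_eq_integral(1) simp: abs_sin_le_one abs_cos_le_one)

lemma fp_0 [simp]: "fp p 0 = 0"
  by (simp add: fp_def)

lemma fp_cos_0_pos:
  assumes s: "s > 0"
  shows "fp_cos s 0 > 0"
proof -
  let ?g = "\<lambda>x. x powr (s - 1) * exp (- (x\<^sup>2))"
  define c where "c = min 1 (2 powr (s - 1)) * exp (- 4)"
  have c: "c > 0"
    by (simp add: c_def)
  have "c \<le> ?g x" if x: "x \<in> {1..2}" for x
  proof -
    have "min 1 (2 powr (s - 1)) \<le> x powr (s - 1)"
    proof (cases "s \<ge> 1")
      case True
      then have "1 powr (s - 1) \<le> x powr (s - 1)"
        using x by (intro powr_mono2) auto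
      then show ?thesis by (simp add: min.coboundedI1)
    next
      case False
      then have "2 powr (s - 1) \<le> x powr (s - 1)"
        using x by (intro powr_mono2') auto
      then show ?thesis by (simp add: min.coboundedI2)
    qed
    moreover have "exp (- 4) \<le> exp (- (x\<^sup>2))"
      using x power_mono[of x 2 2] by auto
    ultimately show ?thesis
      unfolding c_def by (intro mult_mono) auto
  qed
  then have "integral {1..2::real} (\<lambda>_. c) \<le> integral {1..2} ?g"
    by (intro integral_le integrable_on_subinterval[OF powr_gaussian_integrable(3)[OF s]]) auto
  then have "c \<le> integral {1..2} ?g"
    by simp
  also have "\<dots> \<le> integral {0<..} ?g"
    using powr_gaussian_integrable(3)[OF s]
    by (intro integral_subset_le integrable_on_subinterval) auto
  finally show ?thesis
    unfolding fp_cos_def using c by simp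
qed

lemma abs_fp_le: "s > 0 \<Longrightarrow> \<bar>fp s w\<bar> \<le> fp_cos s 0"
  and abs_fp_cos_le: "s > 0 \<Longrightarrow> \<bar>fp_cos s w\<bar> \<le> fp_cos s 0"
  unfolding fp_def fp_cos_def real_norm_def[symmetric]
  by (intro integral_norm_bound_integral powr_gaussian_integrable;
      simp add: abs_mult mult_left_le abs_sin_le_one abs_cos_le_one)+

lemma powr_gaussian_shift:
  fixes x s :: real
  assumes "x > 0"
  shows "x powr (s - 1) * exp (- (x\<^sup>2)) * x = x powr (s + 1 - 1) * exp (- (x\<^sup>2))"
    and "x powr (s - 1) * exp (- (x\<^sup>2)) * x\<^sup>2 = x powr (s + 2 - 1) * exp (- (x\<^sup>2))"
proof -
  have *: "x powr (r - 1) * x = x powr r" for r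
    using powr_mult_base[of x "r - 1"] assms by (simp add: mult.commute)
  show "x powr (s - 1) * exp (- (x\<^sup>2)) * x = x powr (s + 1 - 1) * exp (- (x\<^sup>2))"
    using *[of s] by (simp add: mult_ac)
  show "x powr (s - 1) * exp (- (x\<^sup>2)) * x\<^sup>2 = x powr (s + 2 - 1) * exp (- (x\<^sup>2))"
    using *[of s] *[of "s + 2 - 1"] by (simp add: power2_eq_square mult_ac)
qed

lemma has_real_derivative_fp:
  assumes s: "s > 0"
  shows "(fp s has_real_derivative fp_cos (s + 1) w) (at w)"
proof -
  let ?g = "\<lambda>x. x powr (s - 1) * exp (- (x\<^sup>2))"
  have "((\<lambda>v. integral {0<..} (\<lambda>x. ?g x * sin (v * x))) has_real_derivative
      integral {0<..} (\<lambda>x. ?g x * x * cos (w * x))) (at w)"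
  proof (rule has_real_derivative_integral_dilation)
    show "(\<lambda>x. ?g x * sin (v * x)) integrable_on {0<..}" for v
      using powr_gaussian_integrable(1)[OF s] .
    show "(\<lambda>x. ?g x * x * cos (w * x)) integrable_on {0<..}"
      using powr_gaussian_integrable(2)[of "s + 1" w] s by (rule_tac integrable_eq) (auto simp: powr_gaussian_shift)
    show "(\<lambda>x. ?g x * x\<^sup>2) integrable_on {0<..}"
      using powr_gaussian_integrable(3)[of "s + 2"] s by (rule_tac integrable_eq) (auto simp: powr_gaussian_shift)
    show "\<bar>sin (a + b) - sin a - b * cos a\<bar> \<le> b\<^sup>2" for a b :: real
      by (rule abs_taylor_remainder_le[of sin cos "\<lambda>t. - sin t"])
        (auto intro!: derivative_eq_intros simp: abs_sin_le_one)
  qed simp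
  moreover have "integral {0<..} (\<lambda>x. ?g x * x * cos (w * x)) = fp_cos (s + 1) w"
    unfolding fp_cos_def by (rule integral_cong) (simp add: powr_gaussian_shift)
  ultimately show ?thesis
    unfolding fp_def[abs_def] by simp
qed

lemma has_real_derivative_fp_cos:
  assumes s: "s > 0"
  shows "(fp_cos s has_real_derivative - fp (s + 1) w) (at w)"
proof -
  let ?g = "\<lambda>x. x powr (s - 1) * exp (- (x\<^sup>2))"
  have "((\<lambda>v. integral {0<..} (\<lambda>x. ?g x * cos (v * x))) has_real_derivative
      integral {0<..} (\<lambda>x. ?g x * x * - sin (w * x))) (at w)"
  proof (rule has_real_derivative_integral_dilation)
    show "(\<lambda>x. ?g x * cos (v * x)) integrable_on {0<..}" for v
      using powr_gaussian_integrable(2)[OF s] .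
    show "(\<lambda>x. ?g x * x * - sin (w * x)) integrable_on {0<..}"
      using integrable_neg[OF powr_gaussian_integrable(1)[of "s + 1" w]] s
      by (rule_tac integrable_eq) (auto simp: powr_gaussian_shift)
    show "(\<lambda>x. ?g x * x\<^sup>2) integrable_on {0<..}"
      using powr_gaussian_integrable(3)[of "s + 2"] s by (rule_tac integrable_eq) (auto simp: powr_gaussian_shift)
    show "\<bar>cos (a + b) - cos a - b * - sin a\<bar> \<le> b\<^sup>2" for a b :: real
      by (rule abs_taylor_remainder_le[of cos "\<lambda>t. - sin t" "\<lambda>t. - cos t"])
        (auto intro!: derivative_eq_intros simp: abs_cos_le_one)
  qed simp
  moreover have "integral {0<..} (\<lambda>x. ?g x * x * - sin (w * x)) = - fp (s + 1) w"
    unfolding fp_def integral_neg[symmetric] by (rule integral_cong) (simp add: powr_gaussian_shift)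
  ultimately show ?thesis
    unfolding fp_cos_def[abs_def] by simp
qed

lemma fp_recurrence:
  fixes s w :: real
  assumes "s \<ge> 0"
  shows "2 * fp (s + 2) w = s * fp s w + w * fp_cos (s + 1) w"
proof -
  have "2 * integral {0<..} (\<lambda>x. x powr (s + 2 - 1) * exp (- (x\<^sup>2)) * sin (w * x))
    = s * integral {0<..} (\<lambda>x. x powr (s - 1) * exp (- (x\<^sup>2)) * sin (w * x))
      + w * integral {0<..} (\<lambda>x. x powr (s + 1 - 1) * exp (- (x\<^sup>2)) * cos (w * x))"
    by (rule integral_powr_gaussian_by_parts[where h=sin and h'=cos])
      (auto intro!: assms derivative_eq_intros continuous_intros simp: abs_sin_le_one abs_cos_le_one)
  then show ?thesis
    unfolding fp_def fp_cos_def integral_neg by simp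
qed

lemma fp_cos_recurrence:
  fixes s w :: real
  assumes "s > 0"
  shows "2 * fp_cos (s + 2) w = s * fp_cos s w - w * fp (s + 1) w"
proof -
  have "2 * integral {0<..} (\<lambda>x. x powr (s + 2 - 1) * exp (- (x\<^sup>2)) * cos (w * x))
    = s * integral {0<..} (\<lambda>x. x powr (s - 1) * exp (- (x\<^sup>2)) * cos (w * x))
      + w * integral {0<..} (\<lambda>x. x powr (s + 1 - 1) * exp (- (x\<^sup>2)) * - sin (w * x))"
    by (rule integral_powr_gaussian_by_parts[where h=cos and h'="\<lambda>t. - sin t"])
      (use assms in \<open>auto intro!: derivative_eq_intros continuous_intros simp: abs_sin_le_one abs_cos_le_one\<close>)
  then show ?thesis
    unfolding fp_def fp_cos_def integral_neg by simp
qed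

section \<open>Sturm comparison for 2 y'' + w y' + p y = 0\<close>

definition solves_ode :: "real \<Rightarrow> (real \<Rightarrow> real) \<Rightarrow> (real \<Rightarrow> real) \<Rightarrow> bool" where
  "solves_ode p y y' \<longleftrightarrow> (\<forall>w. (y has_real_derivative y' w) (at w) \<and>
      (y' has_real_derivative - (w * y' w + p * y w) / 2) (at w))"

lemma solves_ode_isCont: "solves_ode p y y' \<Longrightarrow> isCont y w"
  unfolding solves_ode_def by (meson DERIV_isCont)

lemma solves_ode_scale:
  assumes "solves_ode p y y'"
  shows "solves_ode p (\<lambda>w. c * y w) (\<lambda>w. c * y' w)"
  unfolding solves_ode_def
proof (intro allI conjI)
  fix w
  have "(y has_real_derivative y' w) (at w)" "(y' has_real_derivative - (w * y' w + p * y w) / 2) (at w)"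
    using assms unfolding solves_ode_def by auto
  from DERIV_cmult[OF this(1)] DERIV_cmult[OF this(2)]
  show "((\<lambda>w. c * y w) has_real_derivative c * y' w) (at w)"
    and "((\<lambda>w. c * y' w) has_real_derivative - (w * (c * y' w) + p * (c * y w)) / 2) (at w)"
    by (auto elim: DERIV_cong simp: field_simps)
qed

definition wronskian ::
  "(real \<Rightarrow> real) \<Rightarrow> (real \<Rightarrow> real) \<Rightarrow> (real \<Rightarrow> real) \<Rightarrow> (real \<Rightarrow> real) \<Rightarrow> real \<Rightarrow> real" where
  "wronskian y1 y1' y2 y2' w = exp (w\<^sup>2 / 4) * (y1 w * y2' w - y1' w * y2 w)"

lemma has_real_derivative_wronskian:
  assumes "solves_ode p1 y1 y1'" "solves_ode p2 y2 y2'"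
  shows "(wronskian y1 y1' y2 y2' has_real_derivative exp (w\<^sup>2 / 4) * ((p1 - p2) / 2) * y1 w * y2 w) (at w)"
proof -
  have d: "(y1 has_real_derivative y1' w) (at w)" "(y1' has_real_derivative - (w * y1' w + p1 * y1 w) / 2) (at w)"
    "(y2 has_real_derivative y2' w) (at w)" "(y2' has_real_derivative - (w * y2' w + p2 * y2 w) / 2) (at w)"
    using assms unfolding solves_ode_def by auto
  show ?thesis
    unfolding wronskian_def[abs_def]
    by (rule derivative_eq_intros d refl | simp)+ (simp add: field_simps power2_eq_square)
qed

lemma wronskian_strict_decreasing:
  assumes "p1 < p2" "solves_ode p1 y1 y1'" "solves_ode p2 y2 y2'" "u < v"
    and pos: "\<And>w. w \<in> {u<..<v} \<Longrightarrow> 0 < y1 w \<and> 0 < y2 w"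
  shows "wronskian y1 y1' y2 y2' v < wronskian y1 y1' y2 y2' u"
proof (rule DERIV_neg_imp_decreasing_open[OF \<open>u < v\<close>])
  fix w assume "u < w" "w < v"
  then have "exp (w\<^sup>2 / 4) * ((p1 - p2) / 2) * y1 w * y2 w < 0"
    using pos[of w] \<open>p1 < p2\<close> by (simp add: mult_neg_pos mult_pos_neg)
  then show "\<exists>D. (wronskian y1 y1' y2 y2' has_real_derivative D) (at w) \<and> D < 0"
    using has_real_derivative_wronskian[OF assms(2,3)] by blast
next
  show "continuous_on {u..v} (wronskian y1 y1' y2 y2')"
    using has_real_derivative_wronskian[OF assms(2,3)]
    by (meson DERIV_isCont continuous_at_imp_continuous_on)
qed

lemma deriv_nonneg_at_left_zero:
  fixes y :: "real \<Rightarrow> real"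
  assumes "(y has_real_derivative D) (at a)" "y a = 0" "a < b" "\<And>w. w \<in> {a<..<b} \<Longrightarrow> 0 < y w"
  shows "0 \<le> D"
proof (rule tendsto_lowerbound)
  show "((\<lambda>w. (y w - y a) / (w - a)) \<longlongrightarrow> D) (at_right a)"
    using assms(1) by (simp add: has_field_derivative_iff filterlim_at_split)
  show "\<forall>\<^sub>F w in at_right a. 0 \<le> (y w - y a) / (w - a)"
    using assms(2-4) by (auto simp: eventually_at_right[OF \<open>a < b\<close>] intro!: exI[of _ b] less_imp_le)
qed simp

lemma deriv_nonpos_at_right_zero:
  fixes y :: "real \<Rightarrow> real"
  assumes "(y has_real_derivative D) (at b)" "y b = 0" "a < b" "\<And>w. w \<in> {a<..<b} \<Longrightarrow> 0 < y w"
  shows "D \<le> 0"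
proof (rule tendsto_upperbound)
  show "((\<lambda>w. (y w - y b) / (w - b)) \<longlongrightarrow> D) (at_left b)"
    using assms(1) by (simp add: has_field_derivative_iff filterlim_at_split)
  show "\<forall>\<^sub>F w in at_left b. (y w - y b) / (w - b) \<le> 0"
    using assms(2-4) by (auto simp: eventually_at_left[OF \<open>a < b\<close>] divide_pos_neg intro!: exI[of _ a] less_imp_le)
qed simp

lemma wronskian_nonpos_at_left_zero:
  assumes "solves_ode p1 y1 y1'" "solves_ode p2 y2 y2'" "a < b" "y1 a = 0"
    and pos: "\<And>w. w \<in> {a<..<b} \<Longrightarrow> 0 < y1 w \<and> 0 < y2 w"
  shows "wronskian y1 y1' y2 y2' a \<le> 0"
proof -
  have "0 \<le> y1' a"
    using assms(1,3,4) pos by (intro deriv_nonneg_at_left_zero[of y1 _ a b]) (auto simp: solves_ode_def)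
  moreover have "continuous_on (closure {a<..<b}) y2"
    using solves_ode_isCont[OF assms(2)] by (intro continuous_at_imp_continuous_on) auto
  then have "0 \<le> y2 a"
    by (rule continuous_ge_on_closure) (use assms(3) pos[THEN conjunct2, THEN less_imp_le] in auto)
  ultimately show ?thesis
    by (simp add: wronskian_def assms(4))
qed

lemma wronskian_nonneg_at_right_zero:
  assumes "solves_ode p1 y1 y1'" "solves_ode p2 y2 y2'" "a < b" "y1 b = 0"
    and pos: "\<And>w. w \<in> {a<..<b} \<Longrightarrow> 0 < y1 w \<and> 0 < y2 w"
  shows "0 \<le> wronskian y1 y1' y2 y2' b"
proof -
  have "y1' b \<le> 0"
    using assms(1,3,4) pos by (intro deriv_nonpos_at_right_zero[of y1 _ b a]) (auto simp: solves_ode_def)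
  moreover have "continuous_on (closure {a<..<b}) y2"
    using solves_ode_isCont[OF assms(2)] by (intro continuous_at_imp_continuous_on) auto
  then have "0 \<le> y2 b"
    by (rule continuous_ge_on_closure) (use assms(3) pos[THEN conjunct2, THEN less_imp_le] in auto)
  ultimately show ?thesis
    by (simp add: wronskian_def assms(4) mult_nonpos_nonneg mult_nonneg_nonpos)
qed

lemma continuous_nonvanishing_sign:
  fixes y :: "real \<Rightarrow> real"
  assumes "continuous_on S y" "connected S" "\<And>w. w \<in> S \<Longrightarrow> y w \<noteq> 0"
  obtains c where "\<And>w. w \<in> S \<Longrightarrow> 0 < c * y w"
proof (cases "S = {}")
  case False
  then obtain u where u: "u \<in> S" by blast
  have "0 < y u * y w" if w: "w \<in> S" for w
  proof (rule ccontr)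
    assume "\<not> 0 < y u * y w"
    then have "min (y u) (y w) \<le> 0" "0 \<le> max (y u) (y w)"
      by (auto simp: not_less mult_le_0_iff)
    moreover have "min (y u) (y w) \<in> y ` S" "max (y u) (y w) \<in> y ` S"
      using u w by (auto simp: min_def max_def)
    moreover have "connected (y ` S)"
      using assms(1,2) by (rule connected_continuous_image)
    ultimately have "0 \<in> y ` S"
      unfolding connected_iff_interval by blast
    then show False
      using assms(3) by auto
  qed
  then show ?thesis by (rule that)
qed simp

lemma solves_ode_positive_multiple:
  assumes "solves_ode p y y'" "connected S" "\<And>w. w \<in> S \<Longrightarrow> y w \<noteq> 0"
  obtains c where "solves_ode p (\<lambda>w. c * y w) (\<lambda>w. c * y' w)" "\<And>w. w \<in> S \<Longrightarrow> 0 < c * y w"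
proof -
  have "continuous_on S y"
    using solves_ode_isCont[OF assms(1)] by (intro continuous_at_imp_continuous_on) auto
  then obtain c where "\<And>w. w \<in> S \<Longrightarrow> 0 < c * y w"
    using continuous_nonvanishing_sign assms(2,3) by blast
  then show ?thesis
    using that solves_ode_scale[OF assms(1)] by blast
qed

lemma sturm_comparison:
  assumes "p1 < p2" and sol: "solves_ode p1 y1 y1'" "solves_ode p2 y2 y2'"
    and "a < b" "y1 a = 0" "y1 b = 0" "\<And>w. w \<in> {a<..<b} \<Longrightarrow> y1 w \<noteq> 0"
  shows "\<exists>w\<in>{a<..<b}. y2 w = 0"
proof (rule ccontr)
  assume "\<not> ?thesis"
  then obtain c2 where sol2: "solves_ode p2 (\<lambda>w. c2 * y2 w) (\<lambda>w. c2 * y2' w)"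
    and c2: "\<And>w. w \<in> {a<..<b} \<Longrightarrow> 0 < c2 * y2 w"
    using solves_ode_positive_multiple[OF sol(2), of "{a<..<b}"] by auto
  obtain c1 where sol1: "solves_ode p1 (\<lambda>w. c1 * y1 w) (\<lambda>w. c1 * y1' w)"
    and c1: "\<And>w. w \<in> {a<..<b} \<Longrightarrow> 0 < c1 * y1 w"
    using solves_ode_positive_multiple[OF sol(1), of "{a<..<b}"] assms(7) by auto
  let ?W = "wronskian (\<lambda>w. c1 * y1 w) (\<lambda>w. c1 * y1' w) (\<lambda>w. c2 * y2 w) (\<lambda>w. c2 * y2' w)"
  have "?W b < ?W a"
    using c1 c2 by (intro wronskian_strict_decreasing[OF \<open>p1 < p2\<close> sol1 sol2 \<open>a < b\<close>]) auto
  moreover have "?W a \<le> 0"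
    using c1 c2 assms(5) by (intro wronskian_nonpos_at_left_zero[OF sol1 sol2 \<open>a < b\<close>]) auto
  moreover have "0 \<le> ?W b"
    using c1 c2 assms(6) by (intro wronskian_nonneg_at_right_zero[OF sol1 sol2 \<open>a < b\<close>]) auto
  ultimately show False by simp
qed

lemma sturm_comparison_at_top:
  assumes "p1 < p2" and sol: "solves_ode p1 y1 y1'" "solves_ode p2 y2 y2'"
    and "y1 a = 0" "\<And>w. a < w \<Longrightarrow> y1 w \<noteq> 0"
    and lim: "(wronskian y1 y1' y2 y2' \<longlongrightarrow> 0) at_top"
  shows "\<exists>w>a. y2 w = 0"
proof (rule ccontr)
  assume "\<not> ?thesis"
  then obtain c2 where sol2: "solves_ode p2 (\<lambda>w. c2 * y2 w) (\<lambda>w. c2 * y2' w)"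
    and c2: "\<And>w. w \<in> {a<..} \<Longrightarrow> 0 < c2 * y2 w"
    using solves_ode_positive_multiple[OF sol(2), of "{a<..}"] by auto
  obtain c1 where sol1: "solves_ode p1 (\<lambda>w. c1 * y1 w) (\<lambda>w. c1 * y1' w)"
    and c1: "\<And>w. w \<in> {a<..} \<Longrightarrow> 0 < c1 * y1 w"
    using solves_ode_positive_multiple[OF sol(1), of "{a<..}"] assms(5) by auto
  let ?W = "wronskian (\<lambda>w. c1 * y1 w) (\<lambda>w. c1 * y1' w) (\<lambda>w. c2 * y2 w) (\<lambda>w. c2 * y2' w)"
  have dec: "?W v < ?W u" if "a \<le> u" "u < v" for u v
    using c1 c2 that by (intro wronskian_strict_decreasing[OF \<open>p1 < p2\<close> sol1 sol2 \<open>u < v\<close>]) auto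
  have "?W a \<le> 0"
    using c1 c2 assms(4) by (intro wronskian_nonpos_at_left_zero[OF sol1 sol2, of a "a + 1"]) auto
  then have "?W (a + 1) < 0"
    using dec[of a "a + 1"] by simp
  moreover have "?W = (\<lambda>w. c1 * c2 * wronskian y1 y1' y2 y2' w)"
    by (simp add: wronskian_def fun_eq_iff algebra_simps)
  then have "(?W \<longlongrightarrow> 0) at_top"
    using tendsto_mult_right_zero[OF lim, of "c1 * c2"] by simp
  then have "0 \<le> ?W (a + 1)"
  proof (rule tendsto_upperbound)
    show "\<forall>\<^sub>F v in at_top. ?W v \<le> ?W (a + 1)"
      using eventually_gt_at_top[of "a + 1"] by eventually_elim (rule less_imp_le, rule dec, simp_all)
  qed simp
  ultimately show False by simp
qed

section \<open>Counting zeros with Rolle's theorem\<close>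

definition zeros_above :: "real \<Rightarrow> (real \<Rightarrow> real) \<Rightarrow> real set" where
  "zeros_above a g = {w. a < w \<and> g w = 0}"

lemma obtain_next_element:
  fixes Z :: "'a::linorder set"
  assumes "finite Z" "x < y" "y \<in> Z"
  obtains b where "b \<in> Z" "x < b" "\<And>y. y \<in> Z \<Longrightarrow> x < y \<Longrightarrow> b \<le> y"
proof -
  let ?U = "{y \<in> Z. x < y}"
  have "finite ?U" "?U \<noteq> {}"
    using assms by auto
  then show ?thesis
    using that[of "Min ?U"] Min_in[of ?U] Min_le[of ?U] by auto
qed

lemma card_le_card_of_interlacing:
  fixes S T :: "'a::linorder set"
  assumes "finite T" and between: "\<And>x. x \<in> S \<Longrightarrow> \<exists>z\<in>T. x < z \<and> (\<forall>y\<in>S. x < y \<longrightarrow> z < y)"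
  shows "card S \<le> card T"
proof -
  obtain \<phi> where \<phi>: "\<And>x. x \<in> S \<Longrightarrow> \<phi> x \<in> T \<and> x < \<phi> x \<and> (\<forall>y\<in>S. x < y \<longrightarrow> \<phi> x < y)"
    using between by metis
  have "inj_on \<phi> S"
  proof (rule inj_onI)
    fix x y assume "x \<in> S" "y \<in> S" "\<phi> x = \<phi> y"
    then show "x = y"
      using \<phi>[of x] \<phi>[of y] by (cases x y rule: linorder_cases) auto
  qed
  then show ?thesis
    using \<phi> by (intro card_inj_on_le[OF _ _ assms(1)]) auto
qed

lemma exists_deriv_zero_between:
  fixes g g' :: "real \<Rightarrow> real"
  assumes deriv: "\<And>w. (g has_real_derivative g' w) (at w)" and "x < b" "g x = 0" "g b = 0"
  obtains z where "x < z" "z < b" "g' z = 0"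
proof -
  have "continuous_on {x..b} g"
    by (intro continuous_at_imp_continuous_on ballI DERIV_isCont[OF deriv])
  moreover have "g differentiable (at t)" for t
    unfolding real_differentiable_def using deriv by blast
  ultimately obtain z where "x < z" "z < b" "(g has_real_derivative 0) (at z)"
    using Rolle[of x b g] assms(2-4) by auto
  then show ?thesis
    using that DERIV_unique[OF deriv] by blast
qed

lemma card_zeros_above_le_deriv:
  fixes g g' :: "real \<Rightarrow> real"
  assumes deriv: "\<And>w. (g has_real_derivative g' w) (at w)" and "g a = 0"
    and fin: "finite (zeros_above a g')"
  shows "finite (zeros_above a g) \<and> card (zeros_above a g) \<le> card (zeros_above a g')"
proof (rule finite_if_finite_subsets_card_bdd)
  fix F assume F: "F \<subseteq> zeros_above a g" "finite F"
  let ?Z = "insert a F"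
  define S where "S = ?Z - {Max ?Z}"
  have zero: "g x = 0" and ge: "a \<le> x" if "x \<in> ?Z" for x
    using that F(1) \<open>g a = 0\<close> by (auto simp: zeros_above_def)
  have "a \<notin> F"
    using F(1) by (auto simp: zeros_above_def)
  then have "card F = card S"
    using F(2) Max_in[of ?Z] by (simp add: S_def)
  also have "card S \<le> card (zeros_above a g')"
  proof (rule card_le_card_of_interlacing[OF fin])
    fix x assume x: "x \<in> S"
    have xZ: "x \<in> ?Z" "x \<noteq> Max ?Z" and fin_Z: "finite ?Z"
      using x F(2) by (auto simp: S_def)
    have "x < Max ?Z"
      using Max_ge[OF fin_Z xZ(1)] xZ(2) by (rule le_neq_trans)
    then obtain b where b: "b \<in> ?Z" "x < b" "\<And>y. y \<in> ?Z \<Longrightarrow> x < y \<Longrightarrow> b \<le> y"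
      using obtain_next_element[OF fin_Z _ Max_in[OF fin_Z]] by blast
    obtain z where z: "x < z" "z < b" "g' z = 0"
      using exists_deriv_zero_between[OF deriv b(2)] zero b(1) xZ(1) by metis
    moreover have "a < z"
      using ge[of x] x z(1) by (auto simp: S_def)
    moreover have "z < y" if "y \<in> S" "x < y" for y
      using b(3)[of y] that z(2) by (auto simp: S_def)
    ultimately show "\<exists>z\<in>zeros_above a g'. x < z \<and> (\<forall>y\<in>S. x < y \<longrightarrow> z < y)"
      using z(1) by (auto simp: zeros_above_def)
  qed
  finally show "card F \<le> card (zeros_above a g')" .
qed

lemma has_real_derivative_exp_times_deriv:
  assumes "solves_ode p y y'"
  shows "((\<lambda>w. exp (w\<^sup>2 / 4) * y' w) has_real_derivative - (p / 2) * (exp (w\<^sup>2 / 4) * y w)) (at w)"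
proof -
  have "((\<lambda>w. exp (w\<^sup>2 / 4)) has_real_derivative exp (w\<^sup>2 / 4) * (w / 2)) (at w)"
    by (auto intro!: derivative_eq_intros)
  moreover have "(y' has_real_derivative - (w * y' w + p * y w) / 2) (at w)"
    using assms by (simp add: solves_ode_def)
  ultimately show ?thesis
    by (rule DERIV_cong[OF DERIV_mult]) (simp add: field_simps)
qed

lemma solves_ode_card_zeros_deriv_le:
  assumes "solves_ode p y y'" "p \<noteq> 0" "y' a = 0" "finite (zeros_above a y)"
  shows "finite (zeros_above a y') \<and> card (zeros_above a y') \<le> card (zeros_above a y)"
proof -
  have "zeros_above a (\<lambda>w. exp (w\<^sup>2 / 4) * y' w) = zeros_above a y'"
    and "zeros_above a (\<lambda>w. - (p / 2) * (exp (w\<^sup>2 / 4) * y w)) = zeros_above a y"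
    using \<open>p \<noteq> 0\<close> by (auto simp: zeros_above_def)
  moreover have "finite (zeros_above a (\<lambda>w. exp (w\<^sup>2 / 4) * y' w)) \<and>
      card (zeros_above a (\<lambda>w. exp (w\<^sup>2 / 4) * y' w))
        \<le> card (zeros_above a (\<lambda>w. - (p / 2) * (exp (w\<^sup>2 / 4) * y w)))"
    by (rule card_zeros_above_le_deriv[OF has_real_derivative_exp_times_deriv[OF assms(1)]])
      (use calculation assms(3,4) in simp_all)
  ultimately show ?thesis
    by simp
qed

lemma obtain_first_zero:
  fixes y :: "real \<Rightarrow> real"
  assumes cont: "\<And>x. isCont y x" and deriv: "(y has_real_derivative D) (at a)" "D \<noteq> 0" "y a = 0"
    and "a < z0" "y z0 = 0"
  obtains z where "a < z" "y z = 0" "\<And>w. w \<in> {a<..<z} \<Longrightarrow> y w \<noteq> 0"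
proof -
  have "((\<lambda>w. (y w - y a) / (w - a)) \<longlongrightarrow> D) (at_right a)"
    using deriv(1) by (simp add: has_field_derivative_iff filterlim_at_split)
  then have "\<forall>\<^sub>F w in at_right a. (y w - y a) / (w - a) \<noteq> 0"
    using deriv(2) by (rule tendsto_imp_eventually_ne)
  then obtain \<delta> where "a < \<delta>" "\<forall>w>a. w < \<delta> \<longrightarrow> (y w - y a) / (w - a) \<noteq> 0"
    unfolding eventually_at_right_field by blast
  then have \<delta>: "a < \<delta>" "\<And>w. a < w \<Longrightarrow> w < \<delta> \<Longrightarrow> y w \<noteq> 0"
    using \<open>y a = 0\<close> by auto
  define T where "T = {w. \<delta> \<le> w \<and> y w = 0}"
  have "closed T"
    unfolding T_def using cont
    by (intro closed_Collect_conj closed_Collect_le closed_Collect_eq continuous_intros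
        continuous_at_imp_continuous_on) auto
  moreover have "z0 \<in> T"
    using \<delta> \<open>a < z0\<close> \<open>y z0 = 0\<close> by (force simp: T_def)
  moreover have "bdd_below T"
    by (rule bdd_belowI[of _ \<delta>]) (auto simp: T_def)
  ultimately have inf: "Inf T \<in> T"
    using closed_contains_Inf by blast
  show ?thesis
  proof (rule that)
    show "a < Inf T" "y (Inf T) = 0"
      using inf \<delta> by (auto simp: T_def)
    show "y w \<noteq> 0" if "w \<in> {a<..<Inf T}" for w
      using that \<delta>(2)[of w] cInf_lower[OF _ \<open>bdd_below T\<close>, of w] by (force simp: T_def)
  qed
qed

section \<open>The transforms as solutions; the upper bound\<close>

lemma solves_ode_fp:
  assumes "p > 0"
  shows "solves_ode p (fp p) (fp_cos (p + 1))"
  unfolding solves_ode_def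
proof (intro allI conjI)
  fix w
  show "(fp p has_real_derivative fp_cos (p + 1) w) (at w)"
    using has_real_derivative_fp[OF assms] .
  have d: "(fp_cos (p + 1) has_real_derivative - fp (p + 2) w) (at w)"
    using has_real_derivative_fp_cos[of "p + 1" w] assms by (simp add: add.assoc)
  have "2 * fp (p + 2) w = p * fp p w + w * fp_cos (p + 1) w"
    using assms by (intro fp_recurrence) simp
  then show "(fp_cos (p + 1) has_real_derivative - (w * fp_cos (p + 1) w + p * fp p w) / 2) (at w)"
    by (intro DERIV_cong[OF d]) (simp add: field_simps)
qed

lemma solves_ode_fp_cos:
  assumes "q > 0"
  shows "solves_ode q (fp_cos q) (\<lambda>w. - fp (q + 1) w)"
  unfolding solves_ode_def
proof (intro allI conjI)
  fix w
  show "(fp_cos q has_real_derivative - fp (q + 1) w) (at w)"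
    using has_real_derivative_fp_cos[OF assms] .
  have d: "((\<lambda>w. - fp (q + 1) w) has_real_derivative - fp_cos (q + 2) w) (at w)"
    using DERIV_minus[OF has_real_derivative_fp[of "q + 1" w]] assms by (simp add: add.assoc)
  have "2 * fp_cos (q + 2) w = q * fp_cos q w - w * fp (q + 1) w"
    using assms by (rule fp_cos_recurrence)
  then show "((\<lambda>w. - fp (q + 1) w) has_real_derivative - (w * - fp (q + 1) w + q * fp_cos q w) / 2) (at w)"
    by (intro DERIV_cong[OF d]) (simp add: field_simps)
qed

lemma exp_fp_cos_1: "exp (w\<^sup>2 / 4) * fp_cos 1 w = fp_cos 1 0"
proof -
  have "\<forall>v. ((\<lambda>v. exp (v\<^sup>2 / 4) * fp_cos 1 v) has_real_derivative 0) (at v)"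
  proof
    fix v
    have "((\<lambda>v. exp (v\<^sup>2 / 4)) has_real_derivative exp (v\<^sup>2 / 4) * (v / 2)) (at v)"
      by (auto intro!: derivative_eq_intros)
    moreover have "(fp_cos 1 has_real_derivative - fp 2 v) (at v)"
      using has_real_derivative_fp_cos[of 1 v] by simp
    ultimately have d: "((\<lambda>v. exp (v\<^sup>2 / 4) * fp_cos 1 v) has_real_derivative
        exp (v\<^sup>2 / 4) * (v / 2) * fp_cos 1 v + - fp 2 v * exp (v\<^sup>2 / 4)) (at v)"
      by (rule DERIV_mult)
    have "2 * fp 2 v = v * fp_cos 1 v"
      using fp_recurrence[of 0 v] by simp
    then show "((\<lambda>v. exp (v\<^sup>2 / 4) * fp_cos 1 v) has_real_derivative 0) (at v)"
      by (intro DERIV_cong[OF d]) (simp add: field_simps)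
  qed
  from DERIV_isconst_all[OF this, of w 0] show ?thesis
    by simp
qed

lemma fp_cos_1_pos: "0 < fp_cos 1 w"
proof -
  have "0 < exp (w\<^sup>2 / 4) * fp_cos 1 w"
    using exp_fp_cos_1[of w] fp_cos_0_pos[of 1] by simp
  then show ?thesis
    by (simp add: zero_less_mult_iff)
qed

lemma fp_2_pos:
  assumes "0 < w"
  shows "0 < fp 2 w"
proof -
  have "2 * fp 2 w = w * fp_cos 1 w"
    using fp_recurrence[of 0 w] by simp
  moreover have "0 < w * fp_cos 1 w"
    using assms fp_cos_1_pos[of w] by simp
  ultimately show ?thesis
    by simp
qed

lemma zeros_above_fp_eq_empty:
  assumes "0 < p" "p \<le> 2"
  shows "zeros_above 0 (fp p) = {}"
proof (rule ccontr)
  assume "zeros_above 0 (fp p) \<noteq> {}"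
  then obtain w where w: "0 < w" "fp p w = 0"
    by (auto simp: zeros_above_def)
  show False
  proof (cases "p = 2")
    case True
    then show False
      using fp_2_pos[OF w(1)] w(2) by simp
  next
    case False
    with assms have "p < 2" by simp
    have sol: "solves_ode p (fp p) (fp_cos (p + 1))"
      using assms by (intro solves_ode_fp)
    obtain z where z: "0 < z" "fp p z = 0" "\<And>v. v \<in> {0<..<z} \<Longrightarrow> fp p v \<noteq> 0"
      using fp_cos_0_pos[of "p + 1"] assms
      by (rule_tac obtain_first_zero[OF solves_ode_isCont[OF sol] has_real_derivative_fp _ _ w])
        auto
    have "\<exists>v\<in>{0<..<z}. fp 2 v = 0"
      by (rule sturm_comparison[OF \<open>p < 2\<close> sol solves_ode_fp[of 2]]) (use z in auto)
    then obtain v where "v \<in> {0<..<z}" "fp 2 v = 0"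
      by blast
    then show False
      using fp_2_pos[of v] by simp
  qed
qed

lemma card_zeros_fp_cos_le:
  assumes "p > 0" "finite (zeros_above 0 (fp p))"
  shows "finite (zeros_above 0 (fp_cos (p + 1))) \<and>
    card (zeros_above 0 (fp_cos (p + 1))) \<le> card (zeros_above 0 (fp p)) + 1"
proof (rule finite_if_finite_subsets_card_bdd)
  fix F assume F: "F \<subseteq> zeros_above 0 (fp_cos (p + 1))" "finite F"
  show "card F \<le> card (zeros_above 0 (fp p)) + 1"
  proof (cases "F = {}")
    case False
    define c where "c = Min F"
    have c: "c \<in> F" "0 < c" "fp_cos (p + 1) c = 0"
      using Min_in[OF F(2) False] F(1) by (auto simp: c_def zeros_above_def)
    have "F - {c} \<subseteq> zeros_above c (fp_cos (p + 1))"
    proof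
      fix x assume x: "x \<in> F - {c}"
      then have "c < x"
        using Min_le[OF F(2), of x] by (auto simp: c_def)
      then show "x \<in> zeros_above c (fp_cos (p + 1))"
        using x F(1) by (auto simp: zeros_above_def)
    qed
    moreover have sub: "zeros_above c (fp p) \<subseteq> zeros_above 0 (fp p)"
      using c(2) by (auto simp: zeros_above_def)
    then have "finite (zeros_above c (fp_cos (p + 1))) \<and>
        card (zeros_above c (fp_cos (p + 1))) \<le> card (zeros_above c (fp p))"
      using assms c(3) finite_subset[OF sub]
      by (intro solves_ode_card_zeros_deriv_le[OF solves_ode_fp]) auto
    ultimately have "card (F - {c}) \<le> card (zeros_above 0 (fp p))"
      using card_mono[OF assms(2) sub] card_mono by (meson order_trans)
    then show ?thesis
      using c(1) F(2) by (simp add: card_Diff_singleton)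
  qed simp
qed

lemma card_zeros_fp_add_2_le:
  assumes "p > 0" "finite (zeros_above 0 (fp p))"
  shows "finite (zeros_above 0 (fp (p + 2))) \<and>
    card (zeros_above 0 (fp (p + 2))) \<le> card (zeros_above 0 (fp p)) + 1"
proof -
  have "zeros_above 0 (\<lambda>w. - fp (p + 1 + 1) w) = zeros_above 0 (fp (p + 2))"
    by (simp add: zeros_above_def add.assoc)
  moreover have "finite (zeros_above 0 (\<lambda>w. - fp (p + 1 + 1) w)) \<and>
      card (zeros_above 0 (\<lambda>w. - fp (p + 1 + 1) w)) \<le> card (zeros_above 0 (fp_cos (p + 1)))"
    using assms card_zeros_fp_cos_le[OF assms]
    by (intro solves_ode_card_zeros_deriv_le[OF solves_ode_fp_cos]) auto
  ultimately show ?thesis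
    using card_zeros_fp_cos_le[OF assms] by auto
qed

section \<open>Decay at infinity\<close>

lemma bigo_powr_mult:
  fixes f g :: "real \<Rightarrow> real"
  assumes "f \<in> O(\<lambda>w. w powr a)" "g \<in> O(\<lambda>w. w powr b)"
  shows "(\<lambda>w. f w * g w) \<in> O(\<lambda>w. w powr (a + b))"
  using landau_o.big.mult[OF assms] by (simp add: powr_add)

lemma bigo_powr_1_ident: "(\<lambda>w::real. w) \<in> O(\<lambda>w. w powr 1)"
  using eventually_gt_at_top[of "0::real"] by (intro bigoI[where c=1]) (auto elim!: eventually_mono)

lemma bigo_powr_mono:
  fixes f :: "real \<Rightarrow> real"
  assumes "a \<le> b" "f \<in> O(\<lambda>w. w powr a)"
  shows "f \<in> O(\<lambda>w. w powr b)"
proof -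
  have "\<forall>\<^sub>F w in at_top. norm (w powr a) \<le> 1 * norm (w powr b)"
    using eventually_ge_at_top[of "1::real"] by eventually_elim (simp add: powr_mono assms(1))
  then have "(\<lambda>w::real. w powr a) \<in> O(\<lambda>w. w powr b)"
    by (rule bigoI)
  then show ?thesis
    using assms(2) by (rule landau_o.big_trans[rotated])
qed

lemma bigo_powr_tendsto_0:
  fixes f :: "real \<Rightarrow> real"
  assumes "a < 0" "f \<in> O(\<lambda>w. w powr a)"
  shows "(f \<longlongrightarrow> 0) at_top"
proof -
  have "((\<lambda>w::real. w powr a / 1) \<longlongrightarrow> 0) at_top"
    using tendsto_neg_powr[OF assms(1) filterlim_ident] by simp
  then have "(\<lambda>w::real. w powr a) \<in> o(\<lambda>_. 1)"
    by (rule smalloI_tendsto) simp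
  then have "f \<in> o(\<lambda>_. 1)"
    using assms(2) by (rule landau_o.big_small_trans[rotated])
  then show ?thesis
    using smalloD_tendsto[of f at_top "\<lambda>_. 1"] by simp
qed

lemma deriv_le_inverse_square_imp_le:
  fixes h h' :: "real \<Rightarrow> real"
  assumes "0 < x0" "x0 \<le> x" "0 \<le> c"
    and deriv: "\<And>t. x0 \<le> t \<Longrightarrow> (h has_real_derivative h' t) (at t)"
    and bound: "\<And>t. x0 \<le> t \<Longrightarrow> h' t \<le> c / t\<^sup>2"
  shows "h x \<le> h x0 + c / x0"
proof -
  have "h x + c / x \<le> h x0 + c / x0"
  proof (rule DERIV_nonpos_imp_nonincreasing[OF \<open>x0 \<le> x\<close>])
    fix t assume t: "x0 \<le> t" "t \<le> x"
    then have "((\<lambda>t. c / t) has_real_derivative - c / t\<^sup>2) (at t)"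
      using \<open>0 < x0\<close> by (auto intro!: derivative_eq_intros simp: power2_eq_square)
    then have "((\<lambda>t. h t + c / t) has_real_derivative h' t + - c / t\<^sup>2) (at t)"
      using deriv[OF t(1)] by (intro DERIV_add)
    moreover have "h' t + - c / t\<^sup>2 \<le> 0"
      using bound[OF t(1)] by simp
    ultimately show "\<exists>D. ((\<lambda>t. h t + c / t) has_real_derivative D) (at t) \<and> D \<le> 0"
      by blast
  qed
  moreover have "0 \<le> c / x"
    using assms(1-3) by simp
  ultimately show ?thesis
    by linarith
qed

lemma bigo_1_of_deriv_bigo:
  fixes g g' :: "real \<Rightarrow> real"
  assumes deriv: "\<forall>\<^sub>F x in at_top. (g has_real_derivative g' x) (at x)"
    and bound: "g' \<in> O(\<lambda>x. x powr - 2)"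
  shows "g \<in> O(\<lambda>_. 1)"
proof -
  obtain c where c: "c > 0" "\<forall>\<^sub>F x in at_top. \<bar>g' x\<bar> \<le> c * \<bar>x powr - 2\<bar>"
    using bound by (auto elim: landau_o.bigE)
  have "\<forall>\<^sub>F x in at_top. 1 \<le> x \<and> (g has_real_derivative g' x) (at x) \<and> \<bar>g' x\<bar> \<le> c / x\<^sup>2"
    using eventually_ge_at_top[of 1] deriv c(2)
    by eventually_elim (simp add: powr_minus_divide)
  then obtain x0 where x0: "\<And>x. x0 \<le> x \<Longrightarrow> 1 \<le> x \<and> (g has_real_derivative g' x) (at x) \<and> \<bar>g' x\<bar> \<le> c / x\<^sup>2"
    unfolding eventually_at_top_linorder by blast
  have "0 < x0"
    using x0[of x0] by simp
  have bnd: "\<bar>g x\<bar> \<le> \<bar>g x0\<bar> + c / x0" if "x0 \<le> x" for x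
  proof -
    have "g x \<le> g x0 + c / x0"
      using x0 \<open>0 < x0\<close> that c(1)
      by (intro deriv_le_inverse_square_imp_le[where h'=g']) (auto simp: abs_le_iff)
    moreover have "- g x \<le> - g x0 + c / x0"
      using x0 \<open>0 < x0\<close> that c(1)
      by (intro deriv_le_inverse_square_imp_le[where h'="\<lambda>t. - g' t"]) (auto intro: DERIV_minus simp: abs_le_iff)
    ultimately show ?thesis
      by linarith
  qed
  have "\<forall>\<^sub>F x in at_top. norm (g x) \<le> (\<bar>g x0\<bar> + c / x0) * norm (1::real)"
    using eventually_ge_at_top[of x0] by eventually_elim (simp add: bnd)
  then show ?thesis
    by (rule bigoI)
qed

lemma bigo_powr_of_mult_ident:
  fixes f :: "real \<Rightarrow> real"
  assumes "(\<lambda>w. w * f w) \<in> O(\<lambda>w. w powr a)"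
  shows "f \<in> O(\<lambda>w. w powr (a - 1))"
proof -
  have "(\<lambda>w. (w * f w) * w powr - 1) \<in> O(\<lambda>w. w powr (a + - 1))"
    using assms by (rule bigo_powr_mult) simp
  moreover have "\<forall>\<^sub>F w in at_top. (w * f w) * w powr - 1 = f w"
    using eventually_gt_at_top[of 0] by eventually_elim (simp add: powr_minus)
  ultimately show ?thesis
    by (simp add: landau_o.big.in_cong)
qed

lemma fp_bigo_nat:
  "real m < s \<Longrightarrow> fp s \<in> O(\<lambda>w. w powr - real m) \<and> fp_cos s \<in> O(\<lambda>w. w powr - real m)"
proof (induction m arbitrary: s)
  case 0
  then have s: "0 < s"
    by simp
  have "\<forall>\<^sub>F w in at_top. norm (fp s w) \<le> fp_cos s 0 * norm (w powr - real 0) \<and>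
      norm (fp_cos s w) \<le> fp_cos s 0 * norm (w powr - real 0)"
    using eventually_gt_at_top[of 0] by eventually_elim (simp add: s abs_fp_le abs_fp_cos_le)
  then show ?case
    unfolding eventually_conj_iff by (blast intro: bigoI)
next
  case (Suc m)
  then have s: "real m < s - 1" "real m < s + 1" "0 < s - 1"
    by auto
  note IH = Suc.IH[OF s(1)] Suc.IH[OF s(2)]
  have rec: "w * fp s w = (s - 1) * fp_cos (s - 1) w - 2 * fp_cos (s + 1) w"
    "w * fp_cos s w = 2 * fp (s + 1) w - (s - 1) * fp (s - 1) w" for w
    using fp_cos_recurrence[OF s(3), of w] fp_recurrence[of "s - 1" w] s(3) by (simp_all add: algebra_simps)
  have "(\<lambda>w. w * fp s w) \<in> O(\<lambda>w. w powr - real m)" "(\<lambda>w. w * fp_cos s w) \<in> O(\<lambda>w. w powr - real m)"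
    unfolding rec using IH by (auto intro!: sum_in_bigo)
  moreover have "- real (Suc m) = - real m - 1"
    by simp
  ultimately show ?case
    by (simp only:) (blast dest: bigo_powr_of_mult_ident)
qed

lemma has_real_derivative_powr_times_fp:
  assumes "p > 0" "w > 0"
  shows "((\<lambda>w. w powr p * fp p w) has_real_derivative 2 * w powr (p - 1) * fp (p + 2) w) (at w)"
proof -
  have "((\<lambda>w. w powr p * fp p w) has_real_derivative
      p * w powr (p - 1) * fp p w + fp_cos (p + 1) w * w powr p) (at w)"
    using has_real_derivative_powr[OF assms(2)] has_real_derivative_fp[OF assms(1)] by (rule DERIV_mult)
  moreover have "p * w powr (p - 1) * fp p w + fp_cos (p + 1) w * w powr p
      = w powr (p - 1) * (p * fp p w + w * fp_cos (p + 1) w)"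
    using powr_mult_base[of w "p - 1"] assms(2) by (simp add: algebra_simps)
  moreover have "p * fp p w + w * fp_cos (p + 1) w = 2 * fp (p + 2) w"
    using assms(1) by (intro fp_recurrence[symmetric]) simp
  ultimately show ?thesis
    by (simp add: mult_ac)
qed

text \<open>The integer-step bound makes the derivative of w powr p * fp p w an O(w^-2),
  so this product stays bounded.\<close>

lemma fp_bigo:
  assumes "p > 0"
  shows "fp p \<in> O(\<lambda>w. w powr - p)"
proof -
  define m where "m = nat \<lceil>p + 1\<rceil>"
  have m: "p + 1 \<le> real m" "real m < p + 2"
    unfolding m_def using assms by linarith+
  have "fp (p + 2) \<in> O(\<lambda>w. w powr - real m)"
    using fp_bigo_nat m by auto
  then have "(\<lambda>w. 2 * w powr (p - 1) * fp (p + 2) w) \<in> O(\<lambda>w. w powr (p - 1 + - real m))"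
    by (intro bigo_powr_mult) auto
  then have "(\<lambda>w. 2 * w powr (p - 1) * fp (p + 2) w) \<in> O(\<lambda>w. w powr - 2)"
    by (rule bigo_powr_mono[rotated]) (use m in simp)
  moreover have "\<forall>\<^sub>F w in at_top.
      ((\<lambda>w. w powr p * fp p w) has_real_derivative 2 * w powr (p - 1) * fp (p + 2) w) (at w)"
    using eventually_gt_at_top[of 0] by eventually_elim (rule has_real_derivative_powr_times_fp[OF assms])
  ultimately have "(\<lambda>w. w powr p * fp p w) \<in> O(\<lambda>_. 1)"
    by (intro bigo_1_of_deriv_bigo)
  then have "(\<lambda>w. w powr - p * (w powr p * fp p w)) \<in> O(\<lambda>w. w powr - p * 1)"
    by (intro landau_o.big.mult) auto
  moreover have "\<forall>\<^sub>F w in at_top. w powr - p * (w powr p * fp p w) = fp p w"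
    using eventually_gt_at_top[of 0] by eventually_elim (simp add: powr_minus)
  ultimately show ?thesis
    by (simp add: landau_o.big.in_cong)
qed

lemma fp_cos_bigo:
  assumes "p > 0"
  shows "fp_cos (p + 1) \<in> O(\<lambda>w. w powr (- p - 1))"
proof (rule bigo_powr_of_mult_ident)
  have "fp (p + 2) \<in> O(\<lambda>w. w powr - (p + 2))"
    using fp_bigo[of "p + 2"] assms by simp
  then have "fp (p + 2) \<in> O(\<lambda>w. w powr - p)"
    by (rule bigo_powr_mono[rotated]) simp
  moreover have "w * fp_cos (p + 1) w = 2 * fp (p + 2) w - p * fp p w" for w
    using fp_recurrence[of p w] assms by simp
  ultimately show "(\<lambda>w. w * fp_cos (p + 1) w) \<in> O(\<lambda>w. w powr - p)"
    using fp_bigo[OF assms] by (auto intro!: sum_in_bigo)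
qed

lemma exp_fp_cos_add_2_bigo:
  assumes "q > 0"
    and "(\<lambda>w. exp (w\<^sup>2 / 4) * fp_cos q w) \<in> O(\<lambda>w. w powr a)"
    and "(\<lambda>w. exp (w\<^sup>2 / 4) * fp (q + 1) w) \<in> O(\<lambda>w. w powr (a + 1))"
  shows "(\<lambda>w. exp (w\<^sup>2 / 4) * fp_cos (q + 2) w) \<in> O(\<lambda>w. w powr (a + 2))"
proof -
  have "exp (w\<^sup>2 / 4) * fp_cos (q + 2) w
      = q / 2 * (exp (w\<^sup>2 / 4) * fp_cos q w) - 1 / 2 * (w * (exp (w\<^sup>2 / 4) * fp (q + 1) w))" for w
  proof -
    have rec: "fp_cos (q + 2) w = q / 2 * fp_cos q w - 1 / 2 * (w * fp (q + 1) w)"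
      using fp_cos_recurrence[OF assms(1), of w] by linarith
    show ?thesis
      unfolding rec by (simp add: algebra_simps)
  qed
  moreover have "(\<lambda>w. exp (w\<^sup>2 / 4) * fp_cos q w) \<in> O(\<lambda>w. w powr (a + 2))"
    by (rule bigo_powr_mono[OF _ assms(2)]) simp
  moreover have "(\<lambda>w. w * (exp (w\<^sup>2 / 4) * fp (q + 1) w)) \<in> O(\<lambda>w. w powr (a + 2))"
    by (rule bigo_powr_mono[OF _ bigo_powr_mult[OF bigo_powr_1_ident assms(3)]]) simp
  ultimately show ?thesis
    by (simp add: sum_in_bigo)
qed

lemma exp_fp_add_2_bigo:
  assumes "q \<ge> 0"
    and "(\<lambda>w. exp (w\<^sup>2 / 4) * fp q w) \<in> O(\<lambda>w. w powr a)"
    and "(\<lambda>w. exp (w\<^sup>2 / 4) * fp_cos (q + 1) w) \<in> O(\<lambda>w. w powr (a + 1))"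
  shows "(\<lambda>w. exp (w\<^sup>2 / 4) * fp (q + 2) w) \<in> O(\<lambda>w. w powr (a + 2))"
proof -
  have "exp (w\<^sup>2 / 4) * fp (q + 2) w
      = q / 2 * (exp (w\<^sup>2 / 4) * fp q w) + 1 / 2 * (w * (exp (w\<^sup>2 / 4) * fp_cos (q + 1) w))" for w
  proof -
    have rec: "fp (q + 2) w = q / 2 * fp q w + 1 / 2 * (w * fp_cos (q + 1) w)"
      using fp_recurrence[OF assms(1), of w] by linarith
    show ?thesis
      unfolding rec by (simp add: algebra_simps)
  qed
  moreover have "(\<lambda>w. exp (w\<^sup>2 / 4) * fp q w) \<in> O(\<lambda>w. w powr (a + 2))"
    by (rule bigo_powr_mono[OF _ assms(2)]) simp
  moreover have "(\<lambda>w. w * (exp (w\<^sup>2 / 4) * fp_cos (q + 1) w)) \<in> O(\<lambda>w. w powr (a + 2))"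
    by (rule bigo_powr_mono[OF _ bigo_powr_mult[OF bigo_powr_1_ident assms(3)]]) simp
  ultimately show ?thesis
    by (simp add: sum_in_bigo)
qed

lemma exp_fp_even_bigo:
  "(\<lambda>w. exp (w\<^sup>2 / 4) * fp_cos (2 * real k + 1) w) \<in> O(\<lambda>w. w powr (2 * real k)) \<and>
   (\<lambda>w. exp (w\<^sup>2 / 4) * fp (2 * real k + 2) w) \<in> O(\<lambda>w. w powr (2 * real k + 1))"
proof (induction k)
  case 0
  have "(\<lambda>w. exp (w\<^sup>2 / 4) * fp_cos 1 w) = (\<lambda>_. fp_cos 1 0)"
    by (simp add: exp_fp_cos_1)
  moreover have "\<forall>\<^sub>F w in at_top. norm (fp_cos 1 0) \<le> norm (fp_cos 1 0) * norm (w powr 0 :: real)"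
    using eventually_gt_at_top[of "0::real"] by eventually_elim simp
  then have "(\<lambda>_. fp_cos 1 0) \<in> O(\<lambda>w::real. w powr 0)"
    by (rule bigoI)
  moreover have "(\<lambda>w. exp (w\<^sup>2 / 4) * fp 2 w) = (\<lambda>w. fp_cos 1 0 / 2 * w)"
  proof
    fix w
    have "exp (w\<^sup>2 / 4) * fp 2 w = w / 2 * (exp (w\<^sup>2 / 4) * fp_cos 1 w)"
      using fp_recurrence[of 0 w] by (simp add: field_simps)
    then show "exp (w\<^sup>2 / 4) * fp 2 w = fp_cos 1 0 / 2 * w"
      by (simp add: exp_fp_cos_1)
  qed
  ultimately show ?case
    using bigo_powr_1_ident by simp
next
  case (Suc k)
  have C: "(\<lambda>w. exp (w\<^sup>2 / 4) * fp_cos (2 * real k + 1 + 2) w) \<in> O(\<lambda>w. w powr (2 * real k + 2))"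
    using exp_fp_cos_add_2_bigo[of "2 * real k + 1" "2 * real k"] Suc.IH by (simp add: algebra_simps)
  have "(\<lambda>w. exp (w\<^sup>2 / 4) * fp (2 * real k + 2 + 2) w) \<in> O(\<lambda>w. w powr (2 * real k + 1 + 2))"
    using exp_fp_add_2_bigo[of "2 * real k + 2" "2 * real k + 1"] Suc.IH C by (simp add: algebra_simps)
  with C show ?case
    by (simp add: algebra_simps)
qed

lemma wronskian_fp_tendsto_0:
  assumes "2 * real k + 2 < p"
  shows "(wronskian (fp (2 * real k + 2)) (fp_cos (2 * real k + 2 + 1)) (fp p) (fp_cos (p + 1))
    \<longlongrightarrow> 0) at_top"
proof -
  have p: "p > 0"
    using assms by (smt (verit) of_nat_0_le_iff)
  have "2 * real (Suc k) = 2 * real k + 2"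
    by simp
  note E = exp_fp_even_bigo[of k, THEN conjunct2] exp_fp_even_bigo[of "Suc k", THEN conjunct1, unfolded this]
  have "((\<lambda>w. (exp (w\<^sup>2 / 4) * fp (2 * real k + 2) w) * fp_cos (p + 1) w) \<longlongrightarrow> 0) at_top"
    using assms by (intro bigo_powr_tendsto_0[OF _ bigo_powr_mult[OF E(1) fp_cos_bigo[OF p]]]) simp
  moreover have "((\<lambda>w. (exp (w\<^sup>2 / 4) * fp_cos (2 * real k + 2 + 1) w) * fp p w) \<longlongrightarrow> 0) at_top"
    using assms by (intro bigo_powr_tendsto_0[OF _ bigo_powr_mult[OF E(2) fp_bigo[OF p]]]) simp
  ultimately show ?thesis
    unfolding wronskian_def[abs_def] using tendsto_diff by (fastforce simp: algebra_simps)
qed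

section \<open>The lower bound\<close>

lemma obtain_fp_zero_after_even_zero:
  assumes q: "2 * real k + 2 < p" and fin: "finite (zeros_above 0 (fp (2 * real k + 2)))"
    and \<zeta>: "\<zeta> \<in> insert 0 (zeros_above 0 (fp (2 * real k + 2)))"
  obtains z where "\<zeta> < z" "fp p z = 0"
    "\<And>y. y \<in> insert 0 (zeros_above 0 (fp (2 * real k + 2))) \<Longrightarrow> \<zeta> < y \<Longrightarrow> z < y"
proof -
  let ?q = "2 * real k + 2"
  let ?S = "insert 0 (zeros_above 0 (fp ?q))"
  have "p > 0" "?q > 0"
    using q by (smt (verit) of_nat_0_le_iff)+
  note sol = solves_ode_fp[OF \<open>?q > 0\<close>] solves_ode_fp[OF \<open>p > 0\<close>]
  have S: "0 \<le> \<zeta>" "fp ?q \<zeta> = 0"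
    using \<zeta> by (auto simp: zeros_above_def)
  have above: "w \<in> ?S" if "\<zeta> < w" "fp ?q w = 0" for w
    using that S by (auto simp: zeros_above_def)
  show ?thesis
  proof (cases "\<exists>y\<in>?S. \<zeta> < y")
    case True
    then obtain b where b: "b \<in> ?S" "\<zeta> < b" "\<And>y. y \<in> ?S \<Longrightarrow> \<zeta> < y \<Longrightarrow> b \<le> y"
      using obtain_next_element[of ?S \<zeta>] fin by auto
    have "fp ?q b = 0"
      using b(1) by (auto simp: zeros_above_def)
    then have "\<exists>z\<in>{\<zeta><..<b}. fp p z = 0"
      using b S above by (intro sturm_comparison[OF q sol]) (auto, force)
    then show ?thesis
      using that b(3) by (meson greaterThanLessThan_iff less_le_trans)
  next
    case False
    then have "\<exists>z>\<zeta>. fp p z = 0"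
      using S above by (intro sturm_comparison_at_top[OF q sol] wronskian_fp_tendsto_0[OF q]) auto
    then show ?thesis
      using that False by blast
  qed
qed

lemma card_zeros_fp_even_less:
  assumes q: "2 * real k + 2 < p" and fin: "finite (zeros_above 0 (fp (2 * real k + 2)))"
    "finite (zeros_above 0 (fp p))"
  shows "card (zeros_above 0 (fp (2 * real k + 2))) < card (zeros_above 0 (fp p))"
proof -
  let ?S = "insert 0 (zeros_above 0 (fp (2 * real k + 2)))"
  have "card ?S \<le> card (zeros_above 0 (fp p))"
  proof (rule card_le_card_of_interlacing[OF fin(2)])
    fix \<zeta> assume \<zeta>: "\<zeta> \<in> ?S"
    then have "0 \<le> \<zeta>"
      by (auto simp: zeros_above_def)
    obtain z where "\<zeta> < z" "fp p z = 0" "\<And>y. y \<in> ?S \<Longrightarrow> \<zeta> < y \<Longrightarrow> z < y"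
      using obtain_fp_zero_after_even_zero[OF q fin(1) \<zeta>] by blast
    with \<open>0 \<le> \<zeta>\<close> show "\<exists>z\<in>zeros_above 0 (fp p). \<zeta> < z \<and> (\<forall>y\<in>?S. \<zeta> < y \<longrightarrow> z < y)"
      unfolding zeros_above_def by (intro bexI[of _ z]) auto
  qed
  moreover have "0 \<notin> zeros_above 0 (fp (2 * real k + 2))"
    by (simp add: zeros_above_def)
  ultimately show ?thesis
    using fin(1) by simp
qed

theorem lemma16:
  fixes p :: real and k :: nat
  assumes "2 * real k < p" and "p \<le> 2 * real k + 2"
  shows "finite {w::real. 0 < w \<and> fp p w = 0} \<and> card {w::real. 0 < w \<and> fp p w = 0} = k"
proof -
  have "finite (zeros_above 0 (fp p)) \<and> card (zeros_above 0 (fp p)) = k"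
    using assms
  proof (induction k arbitrary: p)
    case 0
    then show ?case
      using zeros_above_fp_eq_empty[of p] by simp
  next
    case (Suc k)
    have shifted: "finite (zeros_above 0 (fp (p - 2))) \<and> card (zeros_above 0 (fp (p - 2))) = k"
      and even: "finite (zeros_above 0 (fp (2 * real k + 2))) \<and> card (zeros_above 0 (fp (2 * real k + 2))) = k"
      using Suc by auto
    have "finite (zeros_above 0 (fp p)) \<and> card (zeros_above 0 (fp p)) \<le> Suc k"
      using card_zeros_fp_add_2_le[of "p - 2"] shifted Suc.prems by simp
    moreover have "Suc k \<le> card (zeros_above 0 (fp p))"
      using card_zeros_fp_even_less[of k p] even calculation Suc.prems by simp
    ultimately show ?case
      by simp
  qed
  then show ?thesis
    by (simp add: zeros_above_def)
qed

end
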